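(* Let $n\ge2$ and let $\mathsf u$ be any subword of $\bm\lambda_n$. Write $\mathsf r^{\mathsf u}=[r_1,\dots,r_m]$ and let $i_j$ denote the index (position in $\bm\lambda_n$) of the skip corresponding to $r_j$. Then for each $j$, $$(r_1\cdots r_{j-1})\,r_j\,(r_{j-1}\cdots r_1)=\Big(\!\Big(0,\; i_j+\Big\lfloor \tfrac{i_j-1}{n-1}\Big\rfloor\Big)\!\Big).$$
   Context: $\widetilde S_n$ is the group, under composition, of bijections $w:\mathbb Z\to\mathbb Z$ with $w(i+n)=w(i)+n$ and $\sum_{i=1}^n w(i)=\binom{n+1}2$. For $i\not\equiv j\pmod n$, $(\!(i,j)\!)$ swaps $i+kn$ and $j+kn$ for all $k\in\mathbb Z$; $s_i=(\!(i,i+1)\!)$, $i\in\{0,\dots,n-1\}$. $\bm\lambda_n$ is the word $[s_0,\dots,s_{n-1}]$ repeated $n-1$ times with $j$-th letter $\sigma_j=s_{(j-1)\bmod n}$ (index in $\{0,\dots,n-1\}$). A subword is $\mathsf u=[u_1,\dots,u_{n(n-1)}]$ with $u_j\in\{\sigma_j,e\}$; $j$ is a skip if $u_j=e$. $u_{(j)}=u_1\cdots u_j$, $u_{(0)}=e$. $\textsc{inv}(\mathsf u)=[t_1,\dots,t_{n(n-1)}]$ with $t_j=u_{(j-1)}\sigma_ju_{(j-1)}^{-1}$, and $\mathsf r^{\mathsf u}$ is the subsequence of the $t_j$ over skips $j$, in increasing order of $j$. *)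

theory Defs
  imports Main
begin

text \<open>Affine permutations are represented as functions int => int; the group
 product is composition, (u v)(x) = u (v x).\<close>

text \<open>The affine transposition ((i,j)) (for i, j not congruent mod n):
 swaps i + k n and j + k n for all k.\<close>
definition atransp :: "nat \<Rightarrow> int \<Rightarrow> int \<Rightarrow> (int \<Rightarrow> int)" where
  "atransp n i j = (\<lambda>x. if x mod int n = i mod int n then x - i + j
                        else if x mod int n = j mod int n then x - j + i else x)"

definition sref :: "nat \<Rightarrow> int \<Rightarrow> (int \<Rightarrow> int)" where
  "sref n i = atransp n i (i + 1)"

text \<open>j-th letter (j >= 1) of the word lambda_n: sigma_j = s_{(j-1) mod n}.\<close>
definition sigma :: "nat \<Rightarrow> nat \<Rightarrow> (int \<Rightarrow> int)" where
  "sigma n j = sref n ((int j - 1) mod int n)"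

definition lamlen :: "nat \<Rightarrow> nat" where
  "lamlen n = n * (n - 1)"

text \<open>A subword of lambda_n: list [u_1,...,u_{n(n-1)}] (0-based list index j-1)
 with u_j in {sigma_j, e}.\<close>
definition is_subword :: "nat \<Rightarrow> (int \<Rightarrow> int) list \<Rightarrow> bool" where
  "is_subword n us \<longleftrightarrow> length us = lamlen n \<and>
     (\<forall>j\<in>{1..lamlen n}. us ! (j - 1) = sigma n j \<or> us ! (j - 1) = id)"

definition lprod :: "(int \<Rightarrow> int) list \<Rightarrow> (int \<Rightarrow> int)" where
  "lprod xs = foldr (\<circ>) xs id"

definition pref :: "(int \<Rightarrow> int) list \<Rightarrow> nat \<Rightarrow> (int \<Rightarrow> int)" where
  "pref us j = lprod (take j us)"

definition tinv :: "nat \<Rightarrow> (int \<Rightarrow> int) list \<Rightarrow> nat \<Rightarrow> (int \<Rightarrow> int)" where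
  "tinv n us j = pref us (j - 1) \<circ> sigma n j \<circ> inv (pref us (j - 1))"

definition skips :: "nat \<Rightarrow> (int \<Rightarrow> int) list \<Rightarrow> nat list" where
  "skips n us = filter (\<lambda>j. us ! (j - 1) = id) [1..<lamlen n + 1]"

definition rseq :: "nat \<Rightarrow> (int \<Rightarrow> int) list \<Rightarrow> (int \<Rightarrow> int) list" where
  "rseq n us = map (tinv n us) (skips n us)"

end

theory Submission
  imports Defs
begin

(* Let W_k = sigma_1 ... sigma_k.  By induction on k, the prefix product u_(k) equals
   t_{i_l} ... t_{i_1} W_k, where i_1 < ... < i_l are the skips up to k: at a skip,
   u_(k) = u_(k-1) = t_k u_(k-1) sigma_k.  As all letters are involutions, the conjugate of r_j
   in the theorem collapses to W_{p-1} sigma_p W_{p-1}^-1 with p = i_j.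

   Conjugation by the shift x |-> x + 1 sends sigma_q to sigma_{q+1}, so W_p sigma_{p+1} W_p^-1
   is W_{p-1} sigma_p W_{p-1}^-1 conjugated by s_0 o (x |-> x + 1).  A bijection w commuting
   with x |-> x + n conjugates ((a, b)) into ((w a, w b)), hence the second endpoint obeys
   e(p+1) = s_0 (e(p) + 1) with e(1) = 1, whose solution is p + floor((p-1)/(n-1)): the chain
   passes a multiple of n once every n - 1 steps. *)

lemma mod_eq_iff_ex_add_mult: "(x::int) mod N = a mod N \<longleftrightarrow> (\<exists>k. x = a + k * N)"
proof
  assume "x mod N = a mod N"
  then obtain k where "x - a = N * k" by (auto simp: mod_eq_dvd_iff elim: dvdE)
  then show "\<exists>k. x = a + k * N" by (intro exI[of _ k]) (simp add: algebra_simps)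
qed auto

definition periodic :: "nat \<Rightarrow> (int \<Rightarrow> int) \<Rightarrow> bool" where
  "periodic n w \<longleftrightarrow> (\<forall>x. w (x + int n) = w x + int n)"

lemma periodic_atransp: "periodic n (atransp n a b)"
  by (simp add: periodic_def atransp_def)

lemma periodic_comp: "periodic n f \<Longrightarrow> periodic n g \<Longrightarrow> periodic n (f \<circ> g)"
  by (simp add: periodic_def)

lemma periodic_add_mult:
  assumes "periodic n w"
  shows "w (x + k * int n) = w x + k * int n"
proof -
  have per: "w (y + int n) = w y + int n" for y
    using assms by (simp add: periodic_def)
  show ?thesis
  proof (induction k rule: int_induct[where k = 0])
    case (step1 i)
    have "w (x + (i + 1) * int n) = w (x + i * int n) + int n"
      using per[of "x + i * int n"] by (simp add: algebra_simps)
    then show ?case using step1 by (simp add: algebra_simps)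
  next
    case (step2 i)
    have "w (x + i * int n) = w (x + (i - 1) * int n) + int n"
      using per[of "x + (i - 1) * int n"] by (simp add: algebra_simps)
    then show ?case using step2 by (simp add: algebra_simps)
  qed simp
qed

lemma periodic_translate:
  assumes per: "periodic n w" and "y mod int n = a mod int n"
  shows "w (y - a + b) = w y - w a + w b"
proof -
  obtain k where k: "y = a + k * int n" using assms(2) mod_eq_iff_ex_add_mult by blast
  have "w (y - a + b) = w (b + k * int n)"
    using k by (simp add: add.commute)
  then show ?thesis
    using k periodic_add_mult[OF per, of a k] periodic_add_mult[OF per, of b k] by simp
qed

lemma periodic_mod_eq_iff:
  assumes per: "periodic n w" and vw: "\<And>x. v (w x) = x"
  shows "w y mod int n = w a mod int n \<longleftrightarrow> y mod int n = a mod int n"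
proof
  assume "w y mod int n = w a mod int n"
  then obtain k where "w y = w (a + k * int n)"
    by (auto simp: mod_eq_iff_ex_add_mult periodic_add_mult[OF per])
  then have "y = a + k * int n" by (metis vw)
  then show "y mod int n = a mod int n" by simp
qed (auto simp: mod_eq_iff_ex_add_mult periodic_add_mult[OF per])

lemma periodic_conj_atransp:
  assumes per: "periodic n w"
    and wv: "\<And>x. w (v x) = x" and vw: "\<And>x. v (w x) = x"
  shows "w \<circ> atransp n a b \<circ> v = atransp n (w a) (w b)"
proof
  fix x
  have "w (atransp n a b y) = atransp n (w a) (w b) (w y)" for y
    by (simp add: atransp_def periodic_mod_eq_iff[OF per vw] periodic_translate[OF per])
  from this[of "v x"] show "(w \<circ> atransp n a b \<circ> v) x = atransp n (w a) (w b) x"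
    by (simp add: wv)
qed

lemma atransp_involution:
  assumes "a mod int n \<noteq> b mod int n"
  shows "atransp n a b \<circ> atransp n a b = id"
proof
  fix x
  have "(x - a + b) mod int n = b mod int n" if "x mod int n = a mod int n"
    using that by (auto simp: mod_eq_iff_ex_add_mult)
  moreover have "(x - b + a) mod int n = a mod int n" if "x mod int n = b mod int n"
    using that by (auto simp: mod_eq_iff_ex_add_mult)
  ultimately show "(atransp n a b \<circ> atransp n a b) x = id x"
    using assms by (auto simp: atransp_def)
qed

lemma atransp_cong:
  assumes "i mod int n = i' mod int n" "j mod int n = j' mod int n" "j - i = j' - i'"
  shows "atransp n i j = atransp n i' j'"
proof
  fix x
  have "x - i + j = x - i' + j'" "x - j + i = x - j' + i'" using assms(3) by auto
  then show "atransp n i j x = atransp n i' j' x" using assms by (simp add: atransp_def)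
qed

lemma lprod_Nil [simp]: "lprod [] = id"
  by (simp add: lprod_def)

lemma lprod_Cons [simp]: "lprod (x # xs) = x \<circ> lprod xs"
  by (simp add: lprod_def)

lemma lprod_append [simp]: "lprod (xs @ ys) = lprod xs \<circ> lprod ys"
  by (induction xs) auto

lemma lprod_comp_lprod_rev:
  assumes "\<forall>f\<in>set xs. f \<circ> f = id"
  shows "lprod xs \<circ> lprod (rev xs) = id"
  using assms
proof (induction xs)
  case (Cons x xs)
  have "lprod (x # xs) \<circ> lprod (rev (x # xs)) = x \<circ> (lprod xs \<circ> lprod (rev xs)) \<circ> x"
    by (simp add: comp_assoc)
  also have "\<dots> = x \<circ> x"
    using Cons.IH Cons.prems by (metis list.set_intros(2) comp_id)
  also have "\<dots> = id"
    using Cons.prems by (meson list.set_intros(1))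
  finally show ?case .
qed simp

lemma lprod_rev_comp_lprod:
  assumes "\<forall>f\<in>set xs. f \<circ> f = id"
  shows "lprod (rev xs) \<circ> lprod xs = id"
  using lprod_comp_lprod_rev[of "rev xs"] assms by simp

lemma inv_lprod:
  assumes "\<forall>f\<in>set xs. f \<circ> f = id"
  shows "inv (lprod xs) = lprod (rev xs)"
  using assms by (intro inv_unique_comp lprod_comp_lprod_rev lprod_rev_comp_lprod)

lemma lprod_map_conj:
  assumes "\<And>x. t (t' x) = x" "\<And>x. t' (t x) = x"
  shows "lprod (map (\<lambda>f. t \<circ> f \<circ> t') xs) = t \<circ> lprod xs \<circ> t'"
  by (induction xs) (auto simp: fun_eq_iff assms)

lemma lprod_conj_cancel:
  assumes "\<forall>f\<in>set ls. f \<circ> f = id" "\<forall>f\<in>set ws. f \<circ> f = id"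
  shows "lprod ls \<circ> (lprod (rev ls) \<circ> lprod ws \<circ> s \<circ> inv (lprod (rev ls) \<circ> lprod ws))
           \<circ> lprod (rev ls) = lprod ws \<circ> s \<circ> lprod (rev ws)"
proof -
  have "inv (lprod (rev ls @ ws)) = lprod (rev ws) \<circ> lprod ls"
    using assms by (subst inv_lprod) auto
  then have "inv (lprod (rev ls) \<circ> lprod ws) = lprod (rev ws) \<circ> lprod ls" by simp
  moreover have "lprod ls (lprod (rev ls) y) = y" for y
    using lprod_comp_lprod_rev[OF assms(1)] by (metis comp_apply id_apply)
  ultimately show ?thesis by (simp add: fun_eq_iff)
qed

lemma mod_neq_mod_add_one: "2 \<le> n \<Longrightarrow> a mod int n \<noteq> (a + 1) mod int n"
  by (auto simp: mod_eq_dvd_iff)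

lemma sigma_involution: "2 \<le> n \<Longrightarrow> sigma n j \<circ> sigma n j = id"
  unfolding sigma_def sref_def by (intro atransp_involution mod_neq_mod_add_one)

lemma sigma_one: "sigma n 1 = atransp n 0 1"
  by (simp add: sigma_def sref_def)

lemma sigma_Suc: "sigma n (Suc q) = (\<lambda>x. x + 1) \<circ> sigma n q \<circ> (\<lambda>x. x - 1)"
proof -
  have "(\<lambda>x. x + 1) \<circ> sigma n q \<circ> (\<lambda>x. x - 1)
      = atransp n ((int q - 1) mod int n + 1) ((int q - 1) mod int n + 1 + 1)"
    unfolding sigma_def sref_def by (rule periodic_conj_atransp) (auto simp: periodic_def)
  also have "\<dots> = sigma n (Suc q)"
    unfolding sigma_def sref_def by (rule atransp_cong) (simp_all add: mod_simps ac_simps)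
  finally show ?thesis ..
qed

definition lambda_endpoint :: "nat \<Rightarrow> nat \<Rightarrow> int" where
  "lambda_endpoint n p = int p + (int p - 1) div (int n - 1)"

lemma atransp_lambda_endpoint_Suc:
  assumes "2 \<le> n" "1 \<le> p"
  shows "atransp n 0 1 (lambda_endpoint n p + 1) = lambda_endpoint n (Suc p)"
proof -
  define m where "m = int n - 1"
  define q where "q = (int p - 1) div m"
  define r where "r = (int p - 1) mod m"
  have m: "1 \<le> m" and n: "int n = m + 1" using assms(1) by (simp_all add: m_def)
  have p: "int p = r + 1 + q * m" and r: "0 \<le> r" "r < m"
    using m by (simp_all add: q_def r_def)
  have e: "lambda_endpoint n p = int p + q"
    by (simp add: lambda_endpoint_def q_def m_def)
  have e_Suc: "lambda_endpoint n (Suc p) = int p + 1 + int p div m"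
    by (simp add: lambda_endpoint_def m_def)
  show ?thesis
  proof (cases "r = m - 1")
    case True
    then have "int p = (q + 1) * m" using p by (simp add: algebra_simps)
    then have "int p div m = q + 1" and c: "lambda_endpoint n p + 1 = (q + 1) * int n"
      using m e n by (simp_all add: algebra_simps)
    moreover have "atransp n 0 1 ((q + 1) * int n) = (q + 1) * int n + 1"
      by (simp add: atransp_def)
    ultimately show ?thesis using e e_Suc by simp
  next
    case False
    have "(r + 1) div m = 0" using r False by simp
    then have "int p div m = q" using p m by simp
    then have e_Suc': "lambda_endpoint n (Suc p) = lambda_endpoint n p + 1" using e e_Suc by simp
    have "lambda_endpoint n p + 1 = r + 2 + q * int n" using e p n by (simp add: algebra_simps)
    moreover have "0 \<le> r + 2" "r + 2 < int n" using r n False by linarith+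
    then have "(r + 2 + q * int n) mod int n = r + 2"
      by (subst mod_mult_self1) (rule mod_pos_pos_trivial)
    ultimately have "(lambda_endpoint n p + 1) mod int n = r + 2" by (simp only:)
    moreover have "1 mod int n = 1" using assms(1) by simp
    ultimately show ?thesis using r e_Suc' by (simp add: atransp_def)
  qed
qed

lemma map_sigma_upt_Suc:
  assumes "1 \<le> p"
  shows "map (sigma n) [1..<Suc p]
       = sigma n 1 # map (\<lambda>f. (\<lambda>x. x + 1) \<circ> f \<circ> (\<lambda>x. x - 1)) (map (sigma n) [1..<p])"
proof -
  have "map (sigma n) [1..<Suc p] = sigma n 1 # map (sigma n \<circ> Suc) [1..<p]"
    using assms by (simp del: upt_Suc add: upt_conv_Cons map_Suc_upt[symmetric])
  then show ?thesis by (simp add: sigma_Suc comp_def)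
qed

lemma sigma_upt_conj:
  assumes n: "2 \<le> n" and "1 \<le> p"
  shows "lprod (map (sigma n) [1..<p]) \<circ> sigma n p \<circ> lprod (rev (map (sigma n) [1..<p]))
       = atransp n 0 (lambda_endpoint n p)"
  using assms(2)
proof (induction p rule: nat_induct_at_least)
  case base
  then show ?case by (simp add: sigma_def sref_def lambda_endpoint_def)
next
  case (Suc p)
  define W where "W = lprod (map (sigma n) [1..<p])"
  define W' where "W' = lprod (rev (map (sigma n) [1..<p]))"
  define w where "w = atransp n 0 1 \<circ> (\<lambda>x. x + 1)"
  define v where "v = (\<lambda>x. x - 1) \<circ> atransp n 0 1"
  have "(\<lambda>x. x + 1) ((\<lambda>x. x - 1) y) = y" "(\<lambda>x. x - 1) ((\<lambda>x. x + 1) y) = y" for y :: int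
    by simp_all
  note conj_shift = lprod_map_conj[of "\<lambda>x. x + 1" "\<lambda>x. x - 1", OF this]
  have "lprod (map (sigma n) [1..<Suc p]) = sigma n 1 \<circ> ((\<lambda>x. x + 1) \<circ> W \<circ> (\<lambda>x. x - 1))"
    and "lprod (rev (map (sigma n) [1..<Suc p])) = ((\<lambda>x. x + 1) \<circ> W' \<circ> (\<lambda>x. x - 1)) \<circ> sigma n 1"
    unfolding map_sigma_upt_Suc[OF Suc.hyps] W_def W'_def rev.simps lprod_append rev_map conj_shift lprod_Cons lprod_Nil comp_id
    by (rule refl)+
  then have "lprod (map (sigma n) [1..<Suc p]) \<circ> sigma n (Suc p) \<circ> lprod (rev (map (sigma n) [1..<Suc p]))
      = w \<circ> (W \<circ> sigma n p \<circ> W') \<circ> v"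
    unfolding sigma_Suc[of n p] sigma_one w_def v_def by (simp add: fun_eq_iff)
  also have "\<dots> = w \<circ> atransp n 0 (lambda_endpoint n p) \<circ> v"
    unfolding W_def W'_def Suc.IH ..
  also have "\<dots> = atransp n (w 0) (w (lambda_endpoint n p))"
  proof (rule periodic_conj_atransp)
    have "atransp n 0 1 (atransp n 0 1 x) = x" for x
      using sigma_involution[OF n, of 1] by (metis sigma_one comp_apply id_apply)
    then show "w (v x) = x" "v (w x) = x" for x
      by (simp_all add: w_def v_def)
    show "periodic n w"
      unfolding w_def by (intro periodic_comp periodic_atransp) (simp add: periodic_def)
  qed
  also have "\<dots> = atransp n 0 (lambda_endpoint n (Suc p))"
    using n atransp_lambda_endpoint_Suc[OF n Suc.hyps] by (simp add: w_def atransp_def)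
  finally show ?case .
qed

lemma take_filter_upt:
  assumes "j < length (filter P [a..<b])"
  shows "take j (filter P [a..<b]) = filter P [a..<filter P [a..<b] ! j]"
proof -
  define c where "c = filter P [a..<b] ! j"
  have "c \<in> set (filter P [a..<b])" unfolding c_def using assms by (rule nth_mem)
  then have c: "a \<le> c" "c < b" "P c" by auto
  have "[a..<b] = [a..<c] @ [c..<b]"
    using upt_add_eq_append[of a c "b - c"] c by simp
  also have "[c..<b] = c # [Suc c..<b]"
    using c by (simp add: upt_conv_Cons)
  finally have split: "filter P [a..<b] = filter P [a..<c] @ c # filter P [Suc c..<b]"
    using c by simp
  have "filter P [a..<b] ! length (filter P [a..<c]) = filter P [a..<b] ! j"
    unfolding c_def[symmetric] unfolding split by simp
  then have "length (filter P [a..<c]) = j"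
    using assms split by (subst (asm) nth_eq_iff_index_eq) auto
  then show ?thesis unfolding c_def[symmetric] split by (simp add: nth_append)
qed

lemma is_subword_nth:
  assumes "is_subword n us" "i < length us"
  shows "us ! i = sigma n (Suc i) \<or> us ! i = id"
proof -
  have "Suc i \<in> {1..lamlen n}" using assms by (simp add: is_subword_def)
  then have "us ! (Suc i - 1) = sigma n (Suc i) \<or> us ! (Suc i - 1) = id"
    using assms(1) unfolding is_subword_def by blast
  then show ?thesis by simp
qed

lemma is_subword_involutions:
  assumes "2 \<le> n" "is_subword n us"
  shows "\<forall>f\<in>set us. f \<circ> f = id"
proof
  fix f assume "f \<in> set us"
  then obtain i where "i < length us" "f = us ! i" by (auto simp: in_set_conv_nth)
  then show "f \<circ> f = id"
    using is_subword_nth[OF assms(2)] sigma_involution[OF assms(1)] by fastforce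
qed

lemma pref_Suc: "k < length us \<Longrightarrow> pref us (Suc k) = pref us k \<circ> us ! k"
  by (simp add: pref_def take_Suc_conv_app_nth)

lemma inv_pref: "\<forall>f\<in>set us. f \<circ> f = id \<Longrightarrow> inv (pref us k) = lprod (rev (take k us))"
  unfolding pref_def by (meson in_set_takeD inv_lprod)

lemma pref_inv_cancel:
  assumes "\<forall>f\<in>set us. f \<circ> f = id"
  shows "pref us k (inv (pref us k) x) = x" "inv (pref us k) (pref us k x) = x"
proof -
  have "\<forall>f\<in>set (take k us). f \<circ> f = id" using assms by (meson in_set_takeD)
  then have "pref us k \<circ> inv (pref us k) = id" "inv (pref us k) \<circ> pref us k = id"
    unfolding inv_pref[OF assms] unfolding pref_def
    using lprod_comp_lprod_rev lprod_rev_comp_lprod by blast+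
  then show "pref us k (inv (pref us k) x) = x" "inv (pref us k) (pref us k x) = x"
    by (metis comp_apply id_apply)+
qed

lemma tinv_involution:
  assumes "2 \<le> n" "\<forall>f\<in>set us. f \<circ> f = id"
  shows "tinv n us q \<circ> tinv n us q = id"
proof -
  have "sigma n q (sigma n q x) = x" for x
    using sigma_involution[OF assms(1)] by (metis comp_apply id_apply)
  then show ?thesis by (simp add: tinv_def fun_eq_iff pref_inv_cancel[OF assms(2)])
qed

lemma tinv_Suc_comp_pref:
  assumes "\<forall>f\<in>set us. f \<circ> f = id"
  shows "tinv n us (Suc k) \<circ> pref us k = pref us k \<circ> sigma n (Suc k)"
  by (simp add: tinv_def fun_eq_iff pref_inv_cancel[OF assms])

lemma pref_eq_tinv_skips_comp_sigma:
  assumes n: "2 \<le> n" and u: "is_subword n us" and "k \<le> length us"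
  shows "pref us k = lprod (rev (map (tinv n us) (filter (\<lambda>p. us ! (p - 1) = id) [1..<Suc k])))
                     \<circ> lprod (map (sigma n) [1..<Suc k])"
proof -
  define R where "R k = lprod (rev (map (tinv n us) (filter (\<lambda>p. us ! (p - 1) = id) [1..<Suc k])))"
    for k
  define W where "W k = lprod (map (sigma n) [1..<Suc k])" for k
  have W_Suc: "W (Suc k) = W k \<circ> sigma n (Suc k)" for k
    by (simp del: upt_Suc add: W_def upt_Suc_append)
  have "pref us k = R k \<circ> W k"
    using assms(3)
  proof (induction k)
    case 0
    then show ?case by (simp add: pref_def R_def W_def)
  next
    case (Suc k)
    then have k: "k < length us" by simp
    have IH: "pref us k = R k \<circ> W k" by (rule Suc.IH) (use k in simp)
    show ?case
    proof (cases "us ! k = id")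
      case True
      then have "R (Suc k) = tinv n us (Suc k) \<circ> R k"
        by (simp del: upt_Suc add: R_def upt_Suc_append)
      moreover have "pref us (Suc k) = pref us k \<circ> (sigma n (Suc k) \<circ> sigma n (Suc k))"
        using pref_Suc[OF k] True sigma_involution[OF n] by simp
      moreover have "\<dots> = tinv n us (Suc k) \<circ> pref us k \<circ> sigma n (Suc k)"
        by (simp add: tinv_Suc_comp_pref[OF is_subword_involutions[OF n u]] comp_assoc)
      ultimately show ?thesis using IH W_Suc by (simp add: comp_assoc)
    next
      case False
      then have "R (Suc k) = R k"
        by (simp del: upt_Suc add: R_def upt_Suc_append)
      moreover have "us ! k = sigma n (Suc k)"
        using False is_subword_nth[OF u k] by blast
      ultimately show ?thesis using IH W_Suc pref_Suc[OF k] by (simp add: comp_assoc)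
    qed
  qed
  then show ?thesis by (simp only: R_def W_def)
qed

theorem lemma5p16:
  fixes n :: nat and us :: "(int \<Rightarrow> int) list" and j :: nat
  assumes "n \<ge> 2"
    and "is_subword n us"
    and "j < length (rseq n us)"
  shows "lprod (take j (rseq n us)) \<circ> (rseq n us ! j) \<circ> lprod (rev (take j (rseq n us)))
       = atransp n 0 (int (skips n us ! j) + (int (skips n us ! j) - 1) div (int n - 1))"
proof -
  define skip where "skip = (\<lambda>p. us ! (p - 1) = id)"
  define p where "p = skips n us ! j"
  define L where "L = map (tinv n us) (filter skip [1..<p])"
  define W where "W = map (sigma n) [1..<p]"
  have skips: "skips n us = filter skip [1..<Suc (length us)]"
    using assms(2) by (simp add: skips_def skip_def is_subword_def)
  have j: "j < length (skips n us)" using assms(3) by (simp add: rseq_def)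
  then have "p \<in> set (skips n us)" by (simp add: p_def)
  then have p: "1 \<le> p" "p - 1 \<le> length us" by (auto simp: skips)
  have "take j (rseq n us) = L" and "rseq n us ! j = tinv n us p"
    using j take_filter_upt[of j skip 1 "Suc (length us)"]
    by (simp_all add: rseq_def take_map L_def p_def skips)
  then have "lprod (take j (rseq n us)) \<circ> (rseq n us ! j) \<circ> lprod (rev (take j (rseq n us)))
      = lprod L \<circ> (pref us (p - 1) \<circ> sigma n p \<circ> inv (pref us (p - 1))) \<circ> lprod (rev L)"
    by (simp add: tinv_def)
  also have "pref us (p - 1) = lprod (rev L) \<circ> lprod W"
    using pref_eq_tinv_skips_comp_sigma[OF assms(1,2) p(2)] p(1)
    by (simp add: L_def W_def skip_def)
  also have "lprod L \<circ> (lprod (rev L) \<circ> lprod W \<circ> sigma n p \<circ> inv (lprod (rev L) \<circ> lprod W))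
      \<circ> lprod (rev L) = lprod W \<circ> sigma n p \<circ> lprod (rev W)"
    using tinv_involution[OF assms(1) is_subword_involutions[OF assms(1,2)]] sigma_involution[OF assms(1)]
    by (intro lprod_conj_cancel) (auto simp: L_def W_def)
  also have "\<dots> = atransp n 0 (lambda_endpoint n p)"
    unfolding W_def using assms(1) p(1) by (rule sigma_upt_conj)
  finally show ?thesis unfolding lambda_endpoint_def p_def .
qed

end
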